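(* Let $S$ be an infinite semigroup and $\mu$ a left fairly invariant finitely-additive probability measure on $S$. If $S$ has a left zero $z$ (i.e. $zx=z$ for all $x\in S$), then $\mu(F)=0$ for every finite $F\subseteq S$. Similarly, if $\mu$ is right fairly invariant and $S$ has a right zero $z$ ($xz=z$ for all $x$), then $\mu(F)=0$ for every finite $F\subseteq S$.
   Context: For $s\in S$, $A\subseteq S$: $s$ acts injectively on the left (right) of $A$ if $a\mapsto sa$ ($a\mapsto as$) is injective on $A$. A finitely-additive probability measure is $\mu:\mathcal P(S)\to[0,1]$, $\mu(S)=1$, additive on disjoint sets. $\mu$ is left fairly invariant if $\mu(sA)=\mu(A)$ whenever $s$ acts injectively on the left of $A$; right fairly invariant if $\mu(As)=\mu(A)$ whenever $s$ acts injectively on the right of $A$. *)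

theory Defs
  imports Main "HOL.Real"
begin

definition fa_prob_measure :: "('a set \<Rightarrow> real) \<Rightarrow> bool" where
  "fa_prob_measure \<mu> \<longleftrightarrow>
     (\<forall>A. 0 \<le> \<mu> A \<and> \<mu> A \<le> 1) \<and> \<mu> UNIV = 1 \<and>
     (\<forall>A B. A \<inter> B = {} \<longrightarrow> \<mu> (A \<union> B) = \<mu> A + \<mu> B)"

definition left_fairly_invariant :: "('a::semigroup_mult set \<Rightarrow> real) \<Rightarrow> bool" where
  "left_fairly_invariant \<mu> \<longleftrightarrow>
     (\<forall>s A. inj_on (\<lambda>a. s * a) A \<longrightarrow> \<mu> ((\<lambda>a. s * a) ` A) = \<mu> A)"

definition right_fairly_invariant :: "('a::semigroup_mult set \<Rightarrow> real) \<Rightarrow> bool" where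
  "right_fairly_invariant \<mu> \<longleftrightarrow>
     (\<forall>s A. inj_on (\<lambda>a. a * s) A \<longrightarrow> \<mu> ((\<lambda>a. a * s) ` A) = \<mu> A)"

end

theory Submission
  imports Defs
begin

(* If z is a left zero, then for every a the left translation by z
   is (trivially) injective on the singleton {a} and maps it onto {z}; left fair
   invariance therefore gives mu {a} = mu {z}: all singletons carry the same
   mass c.  By finite additivity a finite set F has measure card F * c.  Since S
   is infinite it contains finite sets of every cardinality n, so n * c <= 1 for
   all n, which forces c = 0 and hence mu F = 0 for all finite F.  The right
   zero case is symmetric, using right translations. *)

lemma fa_prob_measure_empty:
  assumes "fa_prob_measure \<mu>"
  shows "\<mu> {} = 0"
proof -
  have "\<mu> ({} \<union> {}) = \<mu> {} + \<mu> {}"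
    using assms unfolding fa_prob_measure_def by blast
  then show ?thesis by simp
qed

lemma fa_prob_measure_finite_uniform:
  assumes meas: "fa_prob_measure \<mu>" and sing: "\<And>a. \<mu> {a} = c" and "finite F"
  shows "\<mu> F = real (card F) * c"
  using \<open>finite F\<close>
proof (induction F rule: finite_induct)
  case empty
  then show ?case using fa_prob_measure_empty[OF meas] by simp
next
  case (insert x F)
  have "\<mu> ({x} \<union> F) = \<mu> {x} + \<mu> F"
    using meas insert(2) unfolding fa_prob_measure_def by blast
  then show ?case using insert sing by (simp add: algebra_simps)
qed

text \<open>On an infinite type, a probability measure giving all singletons the same
  mass vanishes on every finite set: the common mass \<open>c\<close> satisfies
  \<open>n * c \<le> 1\<close> for every \<open>n\<close>, hence \<open>c = 0\<close>.\<close>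
lemma uniform_singletons_finite_null:
  assumes inf: "infinite (UNIV :: 'a set)" and meas: "fa_prob_measure (\<mu> :: 'a set \<Rightarrow> real)"
    and sing: "\<And>a. \<mu> {a} = c" and "finite F"
  shows "\<mu> F = 0"
proof -
  have c_nonneg: "c \<ge> 0"
    using meas sing unfolding fa_prob_measure_def by metis
  have bounded: "real n * c \<le> 1" for n
  proof -
    obtain G :: "'a set" where "finite G" "card G = n"
      using infinite_arbitrarily_large[OF inf] by blast
    then have "\<mu> G = real n * c"
      using fa_prob_measure_finite_uniform[OF meas sing] by simp
    then show ?thesis using meas unfolding fa_prob_measure_def by metis
  qed
  have "c = 0"
  proof (rule ccontr)
    assume "c \<noteq> 0"
    with c_nonneg have "c > 0" by simp
    obtain n where "2 / c < real n" using reals_Archimedean2 by blast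
    with \<open>c > 0\<close> have "2 < real n * c" by (simp add: field_simps)
    with bounded[of n] show False by simp
  qed
  then show ?thesis
    using fa_prob_measure_finite_uniform[OF meas sing \<open>finite F\<close>] by simp
qed

text \<open>A left zero \<open>z\<close> sends every singleton onto \<open>{z}\<close> by an injective left
  translation, so under left fair invariance all singletons have mass \<open>\<mu> {z}\<close>.\<close>
lemma left_zero_singletons_uniform:
  assumes "left_fairly_invariant \<mu>" and zero: "\<And>x. z * x = z"
  shows "\<mu> {a} = \<mu> {z}"
proof -
  have "\<mu> ((\<lambda>b. z * b) ` {a}) = \<mu> {a}"
    using assms(1) inj_on_def[of "\<lambda>b. z * b" "{a}"]
    unfolding left_fairly_invariant_def by blast
  then show ?thesis using zero by simp
qed

lemma right_zero_singletons_uniform: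
  assumes "right_fairly_invariant \<mu>" and zero: "\<And>x. x * z = z"
  shows "\<mu> {a} = \<mu> {z}"
proof -
  have "\<mu> ((\<lambda>b. b * z) ` {a}) = \<mu> {a}"
    using assms(1) inj_on_def[of "\<lambda>b. b * z" "{a}"]
    unfolding right_fairly_invariant_def by blast
  then show ?thesis using zero by simp
qed

theorem mainTheorem7:
  fixes \<mu> :: "'a::semigroup_mult set \<Rightarrow> real"
  assumes inf: "infinite (UNIV :: 'a set)"
    and meas: "fa_prob_measure \<mu>"
  shows "(left_fairly_invariant \<mu> \<and> (\<exists>z::'a. \<forall>x. z * x = z)
            \<longrightarrow> (\<forall>F. finite F \<longrightarrow> \<mu> F = 0))
       \<and> (right_fairly_invariant \<mu> \<and> (\<exists>z::'a. \<forall>x. x * z = z)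
            \<longrightarrow> (\<forall>F. finite F \<longrightarrow> \<mu> F = 0))"
proof (intro conjI impI allI)
  fix F :: "'a set"
  assume "left_fairly_invariant \<mu> \<and> (\<exists>z::'a. \<forall>x. z * x = z)" and "finite F"
  then obtain z :: 'a where "left_fairly_invariant \<mu>" "\<forall>x. z * x = z" by blast
  then have "\<And>a. \<mu> {a} = \<mu> {z}" using left_zero_singletons_uniform by blast
  then show "\<mu> F = 0" using uniform_singletons_finite_null[OF inf meas] \<open>finite F\<close> by blast
next
  fix F :: "'a set"
  assume "right_fairly_invariant \<mu> \<and> (\<exists>z::'a. \<forall>x. x * z = z)" and "finite F"
  then obtain z :: 'a where "right_fairly_invariant \<mu>" "\<forall>x. x * z = z" by blast
  then have "\<And>a. \<mu> {a} = \<mu> {z}" using right_zero_singletons_uniform by blast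
  then show "\<mu> F = 0" using uniform_singletons_finite_null[OF inf meas] \<open>finite F\<close> by blast
qed

end
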